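(* The algebra $\mathcal{A}$ (under pointwise operations) of real-valued continuous functions on $[0,1]$ which are analytic on $(0,1)$ admits a set of free generators of cardinality $\mathfrak{c}$, i.e. there is $Z=\{z_\alpha:\alpha<\mathfrak{c}\}\subset\mathcal{A}$ such that for every polynomial $P$ with real coefficients and no constant term and distinct $z_{\alpha_1},\dots,z_{\alpha_n}\in Z$, $P(z_{\alpha_1},\dots,z_{\alpha_n})=0$ iff $P=0$.
   Context: $\mathfrak{c}$ is the cardinality of the continuum. *)

theory Defs
  imports "HOL-Analysis.Analysis" "HOL-Library.Equipollence"
begin

definition real_analytic_on :: "(real \<Rightarrow> real) \<Rightarrow> real set \<Rightarrow> bool" where
  "real_analytic_on f S \<longleftrightarrow>
     (\<forall>x\<in>S. \<exists>r>0. \<exists>a::nat \<Rightarrow> real.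
        \<forall>y\<in>S. \<bar>y - x\<bar> < r \<longrightarrow> (\<lambda>n. a n * (y - x) ^ n) sums f y)"

text \<open>The algebra A: continuous functions on [0,1], analytic on (0,1).
  Functions on [0,1] are represented canonically by extending them by 0.\<close>
definition algA :: "(real \<Rightarrow> real) set" where
  "algA = {f. continuous_on {0..1} f \<and> real_analytic_on f {0<..<1} \<and>
              (\<forall>x. x \<notin> {0..1} \<longrightarrow> f x = 0)}"

text \<open>A real polynomial in n variables is a finitely supported coefficient
  function c on exponent vectors e :: nat \<Rightarrow> nat (with e i = 0 for i \<ge> n).\<close>
definition poly_eval :: "((nat \<Rightarrow> nat) \<Rightarrow> real) \<Rightarrow> (real \<Rightarrow> real) list \<Rightarrow> real \<Rightarrow> real" where
  "poly_eval c zs x = (\<Sum>e\<in>{e. c e \<noteq> 0}. c e * (\<Prod>i<length zs. (zs ! i) x ^ e i))"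

definition is_poly_in :: "nat \<Rightarrow> ((nat \<Rightarrow> nat) \<Rightarrow> real) \<Rightarrow> bool" where
  "is_poly_in n c \<longleftrightarrow> finite {e. c e \<noteq> 0} \<and> (\<forall>e. c e \<noteq> 0 \<longrightarrow> (\<forall>i\<ge>n. e i = 0))"

end

theory Submission
  imports Defs "HOL-Computational_Algebra.Polynomial" "HOL-Algebra.Free_Abelian_Groups"
begin

text \<open>
  Take a Hamel basis B of the reals over the rationals; it has the cardinality of the continuum,
  because the reals are the union of the rational spans of the finite subsets of B. The generators
  are the functions x \<mapsto> exp (t x) for t \<in> B. A monomial in exp (t1 x), ..., exp (tn x) with
  exponent vector e is again an exponential exp ((\<Sum> ei ti) x), and by the rational independence
  of the ti distinct exponent vectors give distinct rates. So a polynomial relation among the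
  generators is a vanishing linear combination of exponentials with distinct rates; sampled at
  the points j/N it becomes a Vandermonde system, and all coefficients vanish.
\<close>

interpretation real_over_rat: vector_space "\<lambda>(q::rat) (x::real). of_rat q * x"
  by unfold_locales (auto simp: algebra_simps of_rat_add of_rat_mult)

lemma real_over_rat_span_subset_image_Fpow:
  "real_over_rat.span B \<subseteq> (\<lambda>U. \<Sum>(q, b)\<in>U. of_rat q * b) ` Fpow (UNIV \<times> B)"
proof
  fix x assume "x \<in> real_over_rat.span B"
  then obtain t r where t: "finite t" "t \<subseteq> B" and x: "x = (\<Sum>a\<in>t. of_rat (r a) * a)"
    unfolding real_over_rat.span_explicit by blast
  let ?U = "(\<lambda>a. (r a, a)) ` t"
  have "inj_on (\<lambda>a. (r a, a)) t" by (auto intro: inj_onI)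
  then have "x = (\<Sum>(q, b)\<in>?U. of_rat q * b)"
    by (simp add: x sum.reindex)
  moreover have "?U \<in> Fpow (UNIV \<times> B)" using t by (auto simp: Fpow_def)
  ultimately show "x \<in> (\<lambda>U. \<Sum>(q, b)\<in>U. of_rat q * b) ` Fpow (UNIV \<times> B)" by blast
qed

lemma infinite_times_self_lepoll: "infinite A \<Longrightarrow> A \<times> A \<lesssim> A"
  by (metis card_of_Times_same_infinite eqpoll_iff_card_of_ordIso eqpoll_imp_lepoll)

lemma hamel_basis_eqpoll_UNIV:
  obtains B where "real_over_rat.independent B" "B \<approx> (UNIV :: real set)"
proof -
  obtain B where indep: "real_over_rat.independent B" and spans: "UNIV \<subseteq> real_over_rat.span B"
    using real_over_rat.basis_exists[of UNIV] by blast
  have UNIV_lepoll: "(UNIV :: real set) \<lesssim> Fpow ((UNIV :: rat set) \<times> B)"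
    using spans real_over_rat_span_subset_image_Fpow[of B] by (metis subset_image_lepoll order.trans)
  have inf: "infinite B"
  proof
    assume "finite B"
    then have "countable (Fpow ((UNIV :: rat set) \<times> B))"
      by (simp add: countable_Fpow countable_finite)
    then have "countable (UNIV :: real set)"
      by (rule countable_lepoll[OF _ UNIV_lepoll])
    with uncountable_UNIV_real show False by contradiction
  qed
  have "(UNIV :: rat set) \<lesssim> (UNIV :: nat set)"
    unfolding lepoll_def by (blast intro: inj_to_nat)
  also have "(UNIV :: nat set) \<lesssim> B"
    using inf by (simp add: infinite_le_lepoll)
  finally have "(UNIV :: rat set) \<times> B \<lesssim> B \<times> B"
    by (rule times_lepoll_mono[OF _ lepoll_refl])
  also have "B \<times> B \<lesssim> B"
    using inf by (rule infinite_times_self_lepoll)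
  finally have "(UNIV :: rat set) \<times> B \<lesssim> B" .
  moreover have "infinite ((UNIV :: rat set) \<times> B)"
    using inf by (auto dest: finite_cartesian_productD2)
  ultimately have "Fpow ((UNIV :: rat set) \<times> B) \<lesssim> B"
    by (metis eqpoll_Fpow eqpoll_imp_lepoll lepoll_trans)
  with UNIV_lepoll have "(UNIV :: real set) \<lesssim> B"
    by (rule lepoll_trans)
  then have "B \<approx> (UNIV :: real set)"
    by (simp add: lepoll_antisym subset_imp_lepoll)
  with indep that show ?thesis by blast
qed

lemma power_sums_eq_zero_imp_coeff_eq_zero:
  fixes w c :: "'a \<Rightarrow> 'b :: idom"
  assumes fin: "finite S" and inj: "inj_on w S"
    and sums: "\<And>j. j < card S \<Longrightarrow> (\<Sum>e\<in>S. c e * w e ^ j) = 0"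
    and a: "a \<in> S"
  shows "c a = 0"
proof -
  define p where "p = (\<Prod>e\<in>S-{a}. [:- w e, 1:])"
  have "degree p = card (S - {a})"
    unfolding p_def by (subst degree_prod_sum_eq) simp_all
  also have "\<dots> < card S"
    using fin a by (rule card_Diff1_less)
  finally have deg: "degree p < card S" .
  have p_roots: "poly p (w e) = 0" if "e \<in> S - {a}" for e
    using that fin unfolding p_def by (auto simp: poly_prod)
  have p_a: "poly p (w a) \<noteq> 0"
    using fin inj a unfolding p_def by (auto simp: poly_prod inj_on_def)
  have "0 = (\<Sum>j\<le>degree p. coeff p j * (\<Sum>e\<in>S. c e * w e ^ j))"
    using sums deg by simp
  also have "\<dots> = (\<Sum>e\<in>S. c e * (\<Sum>j\<le>degree p. coeff p j * w e ^ j))"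
    by (simp add: sum_distrib_left sum_distrib_right mult_ac sum.swap[of _ "{..degree p}"])
  also have "\<dots> = (\<Sum>e\<in>S. c e * poly p (w e))"
    by (simp add: poly_altdef mult_ac)
  also have "\<dots> = c a * poly p (w a)"
    using fin a p_roots by (simp add: sum.remove)
  finally show ?thesis using p_a by simp
qed

lemma exp_sums_eq_zero_on_unit_interval_imp_coeff_eq_zero:
  fixes L c :: "'a \<Rightarrow> real"
  assumes fin: "finite S" and inj: "inj_on L S"
    and zero: "\<forall>x\<in>{0..1}. (\<Sum>e\<in>S. c e * exp (L e * x)) = 0"
    and a: "a \<in> S"
  shows "c a = 0"
proof -
  define N where "N = card S"
  have N_pos: "N > 0" using fin a N_def card_gt_0_iff by blast
  show ?thesis
  proof (rule power_sums_eq_zero_imp_coeff_eq_zero[OF fin _ _ a])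
    show "inj_on (\<lambda>e. exp (L e / N)) S"
      using inj N_pos by (auto simp: inj_on_def)
    fix j assume "j < card S"
    then have "real j / N \<in> {0..1}" using N_def by auto
    moreover have "exp (L e / N) ^ j = exp (L e * (real j / N))" for e
      by (simp flip: exp_of_nat_mult)
    ultimately show "(\<Sum>e\<in>S. c e * exp (L e / N) ^ j) = 0" using zero by (simp only:)
  qed
qed

definition exp_on_unit_interval :: "real \<Rightarrow> real \<Rightarrow> real" where
  "exp_on_unit_interval t x = (if x \<in> {0..1} then exp (t * x) else 0)"

lemma inj_exp_on_unit_interval: "inj exp_on_unit_interval"
  by (rule injI) (metis exp_on_unit_interval_def atLeastAtMost_iff exp_inj_iff mult_1_right order_refl zero_le_one)

lemma exp_on_unit_interval_in_algA: "exp_on_unit_interval t \<in> algA"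
proof -
  have "continuous_on {0..1} (\<lambda>x. exp (t * x))" by (intro continuous_intros)
  then have "continuous_on {0..1} (exp_on_unit_interval t)"
    by (rule continuous_on_cong[THEN iffD1, rotated 2]) (auto simp: exp_on_unit_interval_def)
  moreover have "real_analytic_on (exp_on_unit_interval t) {0<..<1}"
    unfolding real_analytic_on_def
  proof (intro ballI exI conjI impI)
    fix x y :: real assume y: "y \<in> {0<..<1}"
    have "(\<lambda>n. exp (t * x) * ((t * (y - x)) ^ n /\<^sub>R fact n)) sums (exp (t * x) * exp (t * (y - x)))"
      by (intro sums_mult exp_converges)
    moreover have "exp (t * x) * exp (t * (y - x)) = exp_on_unit_interval t y"
      using y by (simp add: exp_on_unit_interval_def flip: exp_add) (simp add: algebra_simps)
    ultimately show "(\<lambda>n. exp (t * x) * t ^ n / fact n * (y - x) ^ n) sums exp_on_unit_interval t y"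
      by (simp add: power_mult_distrib divide_inverse mult_ac)
  qed (rule zero_less_one)
  ultimately show ?thesis unfolding algA_def by (auto simp: exp_on_unit_interval_def)
qed

lemma poly_eval_exp_on_unit_interval:
  assumes "x \<in> {0..1}"
  shows "poly_eval c (map exp_on_unit_interval ts) x =
    (\<Sum>e\<in>{e. c e \<noteq> 0}. c e * exp ((\<Sum>i<length ts. real (e i) * ts ! i) * x))"
  unfolding poly_eval_def
proof (intro sum.cong refl arg_cong[where f = "(*) _"])
  fix e :: "nat \<Rightarrow> nat"
  have "(\<Prod>i<length ts. exp_on_unit_interval (ts ! i) x ^ e i) = (\<Prod>i<length ts. exp (real (e i) * ts ! i * x))"
    using assms by (intro prod.cong refl) (simp add: exp_on_unit_interval_def mult_ac flip: exp_of_nat_mult)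
  also have "\<dots> = exp ((\<Sum>i<length ts. real (e i) * ts ! i) * x)"
    by (simp add: exp_sum sum_distrib_right)
  finally show "(\<Prod>i<length (map exp_on_unit_interval ts). (map exp_on_unit_interval ts ! i) x ^ e i) =
    exp ((\<Sum>i<length ts. real (e i) * ts ! i) * x)" by simp
qed

lemma (in vector_space) independent_image_sum_eq_zero_imp_scalar_eq_zero:
  assumes "independent (f ` I)" "inj_on f I" "finite I"
    and "(\<Sum>i\<in>I. scale (u i) (f i)) = 0" "i \<in> I"
  shows "u i = 0"
proof -
  have "(\<Sum>v\<in>f ` I. scale (u (inv_into I f v)) v) = 0"
    using assms by (simp add: sum.reindex)
  then have "u (inv_into I f (f i)) = 0"
    using assms by (intro independentD[of "f ` I" "f ` I"]) auto
  with assms show ?thesis by simp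
qed

lemma rat_independent_nat_combination_inj:
  assumes indep: "real_over_rat.independent (set ts)" and dist: "distinct ts"
    and supp: "\<forall>i\<ge>length ts. e i = 0" "\<forall>i\<ge>length ts. e' i = 0"
    and eq: "(\<Sum>i<length ts. real (e i) * ts ! i) = (\<Sum>i<length ts. real (e' i) * ts ! i)"
  shows "e = e'"
proof
  fix i
  show "e i = e' i"
  proof (cases "i < length ts")
    case True
    have "(\<Sum>i<length ts. of_rat (of_int (int (e i) - int (e' i))) * ts ! i) = 0"
      using eq by (simp add: of_rat_diff left_diff_distrib sum_subtractf)
    moreover have "set ts = (!) ts ` {..<length ts}"
      by (auto simp: set_conv_nth)
    ultimately have "(of_int (int (e i) - int (e' i)) :: rat) = 0"
      using True indep dist
      by (intro real_over_rat.independent_image_sum_eq_zero_imp_scalar_eq_zero[where f = "(!) ts"])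
         (auto intro: inj_on_nth)
    then show ?thesis by simp
  qed (use supp in auto)
qed

lemma exp_on_unit_interval_poly_eq_zero_imp_coeff_eq_zero:
  assumes indep: "real_over_rat.independent (set ts)" and dist: "distinct ts"
    and poly: "is_poly_in (length ts) c"
    and zero: "\<forall>x\<in>{0..1}. poly_eval c (map exp_on_unit_interval ts) x = 0"
  shows "c e = 0"
proof (rule ccontr)
  assume ce: "c e \<noteq> 0"
  define L where "L e = (\<Sum>i<length ts. real (e i) * ts ! i)" for e :: "nat \<Rightarrow> nat"
  have "inj_on L {e. c e \<noteq> 0}"
    using poly rat_independent_nat_combination_inj[OF indep dist]
    unfolding is_poly_in_def L_def by (auto intro: inj_onI)
  moreover have "finite {e. c e \<noteq> 0}"
    using poly by (simp add: is_poly_in_def)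
  moreover have "\<forall>x\<in>{0..1}. (\<Sum>e\<in>{e. c e \<noteq> 0}. c e * exp (L e * x)) = 0"
    using zero by (simp add: poly_eval_exp_on_unit_interval L_def)
  ultimately have "c e = 0"
    using ce by (intro exp_sums_eq_zero_on_unit_interval_imp_coeff_eq_zero[where c = c and a = e]) auto
  with ce show False by contradiction
qed

lemma exp_on_unit_interval_image_poly_eq_zero_imp_coeff_eq_zero:
  assumes indep: "real_over_rat.independent B"
    and zs: "distinct zs" "set zs \<subseteq> exp_on_unit_interval ` B"
    and poly: "is_poly_in (length zs) c"
    and zero: "\<forall>x\<in>{0..1}. poly_eval c zs x = 0"
  shows "\<forall>e. c e = 0"
proof
  fix e
  define ts where "ts = map (inv_into B exp_on_unit_interval) zs"
  have zs_ts: "zs = map exp_on_unit_interval ts"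
    using zs(2) unfolding ts_def by (simp add: map_idI f_inv_into_f subset_iff)
  have "set ts \<subseteq> B"
    using zs(2) unfolding ts_def by (auto intro: inv_into_into)
  with indep have "real_over_rat.independent (set ts)"
    by (rule real_over_rat.independent_mono)
  moreover have "distinct ts"
    using zs(1) unfolding zs_ts by (simp add: distinct_map)
  moreover have "is_poly_in (length ts) c"
    using poly unfolding zs_ts by simp
  moreover note zero[unfolded zs_ts]
  ultimately show "c e = 0"
    by (rule exp_on_unit_interval_poly_eq_zero_imp_coeff_eq_zero)
qed

theorem mainTheorem8:
  shows "\<exists>Z. Z \<subseteq> algA \<and> Z \<approx> (UNIV :: real set) \<and>
    (\<forall>zs c. distinct zs \<and> set zs \<subseteq> Z \<and> is_poly_in (length zs) c \<and> c (\<lambda>_. 0) = 0 \<longrightarrow>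
       ((\<forall>x\<in>{0..1}. poly_eval c zs x = 0) \<longleftrightarrow> (\<forall>e. c e = 0)))"
proof -
  obtain B where indep: "real_over_rat.independent B" and card: "B \<approx> (UNIV :: real set)"
    using hamel_basis_eqpoll_UNIV by blast
  show ?thesis
  proof (intro exI[where x = "exp_on_unit_interval ` B"] conjI allI impI)
    show "exp_on_unit_interval ` B \<subseteq> algA"
      using exp_on_unit_interval_in_algA by blast
    have "exp_on_unit_interval ` B \<approx> B"
      by (rule inj_on_image_eqpoll_self[OF inj_on_subset[OF inj_exp_on_unit_interval subset_UNIV]])
    then show "exp_on_unit_interval ` B \<approx> (UNIV :: real set)"
      using card by (rule eqpoll_trans)
    fix zs c
    assume zs: "distinct zs \<and> set zs \<subseteq> exp_on_unit_interval ` B \<and> is_poly_in (length zs) c \<and> c (\<lambda>_. 0) = 0"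
    show "(\<forall>x\<in>{0..1}. poly_eval c zs x = 0) \<longleftrightarrow> (\<forall>e. c e = 0)"
    proof
      assume zero: "\<forall>x\<in>{0..1}. poly_eval c zs x = 0"
      show "\<forall>e. c e = 0"
        using zs exp_on_unit_interval_image_poly_eq_zero_imp_coeff_eq_zero[OF indep _ _ _ zero] by blast
    qed (simp add: poly_eval_def)
  qed
qed

end
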